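(* Let $P$ be a generic set of $n$ points in the plane in convex position. Then $\operatorname{cr}(P)\ge \lfloor n/2\rfloor -1$.
   Context: A finite planar point set is in general position if no three of its points are collinear. It is generic if it is in general position and every subset of it has a unique (Euclidean) minimum spanning tree (MST); for a generic set $X$, $T_X$ denotes the MST of $X$, drawn with straight-line edges. For disjoint point sets $R,B$ with $R\cup B$ generic, $\operatorname{cr}(R,B)$ denotes the number of crossings between the edges of $T_R$ and the edges of $T_B$. For a generic point set $P$, $\operatorname{cr}(P)=\max \operatorname{cr}(R,B)$, the maximum over all partitions $P=R\cup B$ into two disjoint sets. *)

theory Defs
  imports "HOL-Analysis.Analysis"
begin

type_synonym point = "real^2"

definition general_position :: "point set \<Rightarrow> bool" where
  "general_position P \<longleftrightarrow>
     (\<forall>a\<in>P. \<forall>b\<in>P. \<forall>c\<in>P. a \<noteq> b \<and> a \<noteq> c \<and> b \<noteq> c \<longrightarrow> \<not> collinear {a, b, c})"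

definition all_edges :: "point set \<Rightarrow> point set set" where
  "all_edges X = {{a, b} | a b. a \<in> X \<and> b \<in> X \<and> a \<noteq> b}"

definition adj :: "point set set \<Rightarrow> (point \<times> point) set" where
  "adj E = {(a, b). {a, b} \<in> E}"

definition spanning_tree :: "point set \<Rightarrow> point set set \<Rightarrow> bool" where
  "spanning_tree X E \<longleftrightarrow> E \<subseteq> all_edges X
     \<and> (\<forall>a\<in>X. \<forall>b\<in>X. (a, b) \<in> (adj E)\<^sup>*)
     \<and> card E = card X - 1"

definition edge_len :: "point set \<Rightarrow> real" where
  "edge_len e = Sup {dist a b | a b. a \<in> e \<and> b \<in> e}"

definition weight :: "point set set \<Rightarrow> real" where
  "weight E = (\<Sum>e\<in>E. edge_len e)"

definition is_mst :: "point set \<Rightarrow> point set set \<Rightarrow> bool" where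
  "is_mst X E \<longleftrightarrow> spanning_tree X E \<and> (\<forall>E'. spanning_tree X E' \<longrightarrow> weight E \<le> weight E')"

definition generic :: "point set \<Rightarrow> bool" where
  "generic P \<longleftrightarrow> finite P \<and> general_position P \<and> (\<forall>S\<subseteq>P. \<exists>!E. is_mst S E)"

text \<open>The (unique, for generic sets) minimum spanning tree T_X.\<close>
definition mst :: "point set \<Rightarrow> point set set" where
  "mst X = (THE E. is_mst X E)"

text \<open>Number of crossing pairs (e, f), e an edge of T_R and f an edge of T_B,
  where edges are drawn as straight segments (convex hull of the two endpoints).\<close>
definition cr2 :: "point set \<Rightarrow> point set \<Rightarrow> nat" where
  "cr2 R B = card {(e, f). e \<in> mst R \<and> f \<in> mst B \<and> convex hull e \<inter> convex hull f \<noteq> {}}"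

definition cr :: "point set \<Rightarrow> nat" where
  "cr P = Max {cr2 R B | R B. R \<union> B = P \<and> R \<inter> B = {}}"

definition convex_position :: "point set \<Rightarrow> bool" where
  "convex_position P \<longleftrightarrow> (\<forall>p\<in>P. p \<notin> convex hull (P - {p}))"

end

theory Submission
  imports Defs
begin

(* Fix p in P and list the other points by angle around p, which is possible since p is a vertex
   of the convex hull.  The points at even positions 0, 2, 4, ... form B, so card B = n div 2, and
   the others, p included, form R.  For x, z in B, the point p and the point right after x in the
   angular order lie strictly on opposite sides of the line xz, so the path joining them in any
   spanning tree of R has an edge with endpoints on opposite sides; by convex position that edge
   meets the segment xz.  Hence each of the card B - 1 edges of a spanning tree of B meets an edge
   of the tree of R. *)

definition orient :: "point \<Rightarrow> point \<Rightarrow> point \<Rightarrow> real" where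
  "orient a b c = (b - a)$1 * (c - a)$2 - (b - a)$2 * (c - a)$1"

lemma orient_cyclic: "orient b c a = orient a b c"
  by (simp add: orient_def algebra_simps)

lemma orient_swap: "orient b a c = - orient a b c"
  by (simp add: orient_def algebra_simps)

lemma orient_affine:
  "orient a b ((1 - l) *\<^sub>R c + l *\<^sub>R d) = (1 - l) * orient a b c + l * orient a b d"
  by (simp add: orient_def algebra_simps)

lemma orient_decompose: "orient x z y = orient p x z - orient p y z - orient p x y"
  by (simp add: orient_def algebra_simps)

lemma orient_cramer:
  "orient p x z *\<^sub>R (y - p) = orient p y z *\<^sub>R (x - p) + orient p x y *\<^sub>R (z - p)"
  by (simp add: orient_def vec_eq_iff forall_2 algebra_simps)

lemma orient_eq_0_imp_collinear:
  assumes "orient a b c = 0"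
  shows "collinear {a, b, c}"
proof (cases "b = a")
  case True
  then show ?thesis by (simp add: collinear_2)
next
  case False
  define v where "v = b - a"
  define w where "w = c - a"
  define N where "N = v$1 * v$1 + v$2 * v$2"
  have "v \<noteq> 0" using False v_def by simp
  then have "N \<noteq> 0" by (simp add: N_def vec_eq_iff forall_2 add_nonneg_eq_0_iff)
  have o: "v$1 * w$2 = v$2 * w$1" using assms by (simp add: orient_def v_def w_def)
  have "N * w$1 - (v$1 * w$1 + v$2 * w$2) * v$1 = v$2 * (v$2 * w$1 - v$1 * w$2)"
    and "N * w$2 - (v$1 * w$1 + v$2 * w$2) * v$2 = v$1 * (v$1 * w$2 - v$2 * w$1)"
    by (simp_all add: N_def algebra_simps)
  then have "c - a = ((v$1 * w$1 + v$2 * w$2) / N) *\<^sub>R v"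
    using o \<open>N \<noteq> 0\<close> by (simp add: w_def[symmetric] vec_eq_iff forall_2 field_simps)
  then have "collinear {0, v, c - a}" by (auto simp: collinear_lemma)
  then show ?thesis using collinear_3[of b a c] by (simp add: v_def insert_commute)
qed

lemma general_position_orient_nonzero:
  assumes "general_position P" "a \<in> P" "b \<in> P" "c \<in> P" "a \<noteq> b" "a \<noteq> c" "b \<noteq> c"
  shows "orient a b c \<noteq> 0"
  using assms orient_eq_0_imp_collinear unfolding general_position_def by blast

lemma orient_neg_if_outside_triangle:
  assumes "orient p x y > 0" "orient p y z > 0" "orient p x z > 0"
    and "y \<notin> convex hull {p, x, z}"
  shows "orient x z y < 0"
proof (rule ccontr)
  assume "\<not> orient x z y < 0"
  define D where "D = orient p x z"
  define a where "a = orient p y z / D"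
  define b where "b = orient p x y / D"
  have "D > 0" using assms(3) by (simp add: D_def)
  have "a \<ge> 0" "b \<ge> 0" using assms(1,2) \<open>D > 0\<close> by (simp_all add: a_def b_def)
  moreover have "a + b \<le> 1"
    using \<open>\<not> orient x z y < 0\<close> \<open>D > 0\<close> orient_decompose[of x z y p]
    by (simp add: a_def b_def D_def field_simps)
  moreover have "y = (1 - a - b) *\<^sub>R p + a *\<^sub>R x + b *\<^sub>R z"
  proof -
    have "D *\<^sub>R (y - p) = D *\<^sub>R (a *\<^sub>R (x - p) + b *\<^sub>R (z - p))"
      using orient_cramer[of p x z y] \<open>D > 0\<close> by (simp add: a_def b_def D_def scaleR_add_right)
    then have "y - p = a *\<^sub>R (x - p) + b *\<^sub>R (z - p)" using \<open>D > 0\<close> by simp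
    then show ?thesis by (simp add: algebra_simps)
  qed
  ultimately have "y \<in> convex hull {p, x, z}"
    unfolding convex_hull_3 by (intro CollectI exI[of _ "1 - a - b"] exI[of _ a] exI[of _ b]) auto
  then show False using assms(4) by contradiction
qed

lemma segments_intersect_if_separated:
  assumes "orient a b c > 0" "orient a b d < 0"
    and "a \<notin> convex hull {b, c, d}" "b \<notin> convex hull {a, c, d}"
  shows "convex hull {c, d} \<inter> convex hull {a, b} \<noteq> {}"
proof -
  define l where "l = orient a b c / (orient a b c - orient a b d)"
  define x where "x = (1 - l) *\<^sub>R c + l *\<^sub>R d"
  have "0 \<le> l" "l \<le> 1" using assms(1,2) by (simp_all add: l_def field_simps)
  then have x_cd: "x \<in> convex hull {c, d}"
    unfolding x_def convex_hull_2 by (intro CollectI exI[of _ "1 - l"] exI[of _ l]) auto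
  have "orient a b x = (1 - l) * orient a b c + l * orient a b d"
    unfolding x_def by (rule orient_affine)
  also have "\<dots> = 0" using assms(1,2) by (simp add: l_def field_simps)
  finally have "orient a b x = 0" .
  then have "between (b, x) a \<or> between (x, a) b \<or> between (a, b) x"
    using orient_eq_0_imp_collinear collinear_between_cases by blast
  moreover have "\<not> between (b, x) a"
  proof
    assume "between (b, x) a"
    moreover have "closed_segment b x \<subseteq> convex hull {b, c, d}"
      using x_cd hull_mono[of "{c, d}" "{b, c, d}"]
      by (intro closed_segment_subset) (auto intro: hull_inc)
    ultimately show False using assms(3) by (auto simp: between_mem_segment)
  qed
  moreover have "\<not> between (x, a) b"
  proof
    assume "between (x, a) b"
    moreover have "closed_segment x a \<subseteq> convex hull {a, c, d}"
      using x_cd hull_mono[of "{c, d}" "{a, c, d}"]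
      by (intro closed_segment_subset) (auto intro: hull_inc)
    ultimately show False using assms(4) by (auto simp: between_mem_segment)
  qed
  ultimately have "x \<in> convex hull {a, b}" by (simp add: between_mem_segment segment_convex_hull)
  then show ?thesis using x_cd by blast
qed

lemma convex_position_notin_hull:
  assumes "convex_position P" "y \<in> P" "S \<subseteq> P - {y}"
  shows "y \<notin> convex hull S"
  using assms hull_mono[OF assms(3)] unfolding convex_position_def by blast

definition separates_chords :: "point set \<Rightarrow> point set \<Rightarrow> bool" where
  "separates_chords R B \<longleftrightarrow>
     (\<forall>x\<in>B. \<forall>z\<in>B. x \<noteq> z \<longrightarrow> (\<exists>u\<in>R. \<exists>v\<in>R. orient x z u > 0 \<and> orient x z v < 0))"

lemma rtrancl_exit_step:
  assumes "(x, y) \<in> r\<^sup>*" "Q x" "\<not> Q y"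
  shows "\<exists>(u, v) \<in> r. Q u \<and> \<not> Q v"
  using assms by induction auto

lemma spanning_tree_crosses_chord:
  assumes "convex_position P" "general_position P" "R \<subseteq> P" "spanning_tree R T"
    and "x \<in> P - R" "z \<in> P - R" "x \<noteq> z"
    and "u \<in> R" "v \<in> R" "orient x z u > 0" "orient x z v < 0"
  shows "\<exists>e\<in>T. convex hull e \<inter> convex hull {x, z} \<noteq> {}"
proof -
  have "(u, v) \<in> (adj T)\<^sup>*" using assms(4,8,9) by (simp add: spanning_tree_def)
  then obtain r r' where e: "{r, r'} \<in> T" and "orient x z r > 0" "\<not> orient x z r' > 0"
    using rtrancl_exit_step[where Q = "\<lambda>r. orient x z r > 0"] assms(10,11)
    by (fastforce simp: adj_def)
  moreover have "r \<in> R" "r' \<in> R"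
    using e assms(4) by (auto simp: spanning_tree_def all_edges_def doubleton_eq_iff)
  moreover have "orient x z r' \<noteq> 0"
    using \<open>r' \<in> R\<close> assms(3,5-7) by (intro general_position_orient_nonzero[OF assms(2)]) auto
  moreover have "x \<notin> convex hull {z, r, r'}" "z \<notin> convex hull {x, r, r'}"
    using \<open>r \<in> R\<close> \<open>r' \<in> R\<close> assms(3,5-7)
    by (intro convex_position_notin_hull[OF assms(1)]; auto)+
  ultimately have "convex hull {r, r'} \<inter> convex hull {x, z} \<noteq> {}"
    by (intro segments_intersect_if_separated) auto
  then show ?thesis using e by blast
qed

lemma angular_slope:
  assumes "finite S" "p \<notin> convex hull S"
  obtains f :: "point \<Rightarrow> real"
  where "\<And>q q'. q \<in> S \<Longrightarrow> q' \<in> S \<Longrightarrow> f q < f q' \<longleftrightarrow> orient p q q' > 0"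
    and "\<And>q q'. q \<in> S \<Longrightarrow> q' \<in> S \<Longrightarrow> f q = f q' \<longleftrightarrow> orient p q q' = 0"
proof -
  have "closed (convex hull S)"
    using assms(1) by (simp add: compact_imp_closed finite_imp_compact_convex_hull)
  then obtain a c where "inner a p < c" and hull_side: "\<forall>x\<in>convex hull S. c < inner a x"
    using separating_hyperplane_closed_point[OF convex_convex_hull _ assms(2)] by blast
  \<comment> \<open>\<open>(s q, t q)\<close> are the coordinates of \<open>q - p\<close> in the frame \<open>a\<close>, \<open>a\<close> rotated by 90 degrees;
    \<open>S\<close> lies in the half-plane \<open>s > 0\<close>, where the slope \<open>t / s\<close> increases with the angle at \<open>p\<close>.\<close>
  define s where "s q = inner a (q - p)" for q
  define t where "t q = a$1 * (q - p)$2 - a$2 * (q - p)$1" for q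
  define f where "f q = t q / s q" for q
  have s_pos: "s q > 0" if "q \<in> S" for q
    using hull_side hull_inc[OF that] \<open>inner a p < c\<close> by (fastforce simp: s_def inner_diff_right)
  have identity: "s q * t q' - t q * s q' = inner a a * orient p q q'" for q q'
    by (simp add: s_def t_def orient_def inner_vec_def sum_2 algebra_simps)
  have a_sq: "inner a a > 0" if "q \<in> S" for q
    using s_pos[OF that] by (auto simp: s_def)
  have f_less: "f q < f q' \<longleftrightarrow> orient p q q' > 0" if "q \<in> S" "q' \<in> S" for q q'
  proof -
    have "f q < f q' \<longleftrightarrow> 0 < s q * t q' - t q * s q'"
      using s_pos[OF that(1)] s_pos[OF that(2)]
      by (simp add: f_def divide_less_eq less_divide_eq mult.commute)
    then show ?thesis using identity a_sq[OF that(1)] by (simp add: zero_less_mult_iff)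
  qed
  have f_eq: "f q = f q' \<longleftrightarrow> orient p q q' = 0" if "q \<in> S" "q' \<in> S" for q q'
  proof -
    have "f q = f q' \<longleftrightarrow> t q * s q' = t q' * s q"
      using s_pos[OF that(1)] s_pos[OF that(2)] by (simp add: f_def frac_eq_eq)
    also have "\<dots> \<longleftrightarrow> s q * t q' - t q * s q' = 0"
      by (auto simp: mult.commute)
    also have "\<dots> \<longleftrightarrow> orient p q q' = 0" using identity a_sq[OF that(1)] by simp
    finally show ?thesis .
  qed
  show thesis using f_less f_eq by (rule that)
qed

lemma angular_sorted_list:
  assumes "finite S" "p \<notin> convex hull S"
    and "\<And>q q'. q \<in> S \<Longrightarrow> q' \<in> S \<Longrightarrow> q \<noteq> q' \<Longrightarrow> orient p q q' \<noteq> 0"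
  obtains ys where "set ys = S" "distinct ys" "sorted_wrt (\<lambda>q q'. orient p q q' > 0) ys"
proof -
  obtain f :: "point \<Rightarrow> real"
    where f_less: "\<And>q q'. q \<in> S \<Longrightarrow> q' \<in> S \<Longrightarrow> f q < f q' \<longleftrightarrow> orient p q q' > 0"
      and f_eq: "\<And>q q'. q \<in> S \<Longrightarrow> q' \<in> S \<Longrightarrow> f q = f q' \<longleftrightarrow> orient p q q' = 0"
    using angular_slope[OF assms(1,2)] by blast
  have "inj_on f S" by (rule inj_onI) (use f_eq assms(3) in blast)
  obtain xs where "set xs = S" "distinct xs" using finite_distinct_list[OF assms(1)] by blast
  define ys where "ys = sort_key f xs"
  have "set ys = S" "distinct ys" using \<open>set xs = S\<close> \<open>distinct xs\<close> by (simp_all add: ys_def)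
  then have "sorted_wrt (<) (map f ys)"
    using \<open>inj_on f S\<close> by (simp add: strict_sorted_iff distinct_map ys_def)
  then have "sorted_wrt (\<lambda>q q'. orient p q q' > 0) ys"
    unfolding sorted_wrt_map
    by (rule sorted_wrt_mono_rel[rotated]) (use \<open>set ys = S\<close> f_less in blast)
  with \<open>set ys = S\<close> \<open>distinct ys\<close> show thesis by (rule that)
qed

lemma angular_chord_separates:
  assumes "convex_position P" "p \<in> P" "set ys = P - {p}" "distinct ys"
    and "sorted_wrt (\<lambda>q q'. orient p q q' > 0) ys" "i + 1 < j" "j < length ys"
  shows "orient (ys ! i) (ys ! j) p > 0" "orient (ys ! i) (ys ! j) (ys ! (i + 1)) < 0"
proof -
  define x y z where "x = ys ! i" "y = ys ! (i + 1)" "z = ys ! j"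
  have ord: "orient p (ys ! a) (ys ! b) > 0" if "a < b" "b < length ys" for a b
    using assms(5) that by (simp add: sorted_wrt_iff_nth_less)
  then show "orient x z p > 0"
    using assms(6,7) orient_cyclic[of x z p] unfolding x_y_z_def by simp
  have "x \<noteq> y" "y \<noteq> z" "{p, x, z} \<subseteq> P" "y \<in> P - {p}"
    using assms(2-4,6,7) nth_mem[of _ ys] unfolding x_y_z_def by (auto simp: nth_eq_iff_index_eq)
  then have "y \<notin> convex hull {p, x, z}"
    by (intro convex_position_notin_hull[OF assms(1)]) auto
  then show "orient x z y < 0"
    using ord assms(6,7) unfolding x_y_z_def by (intro orient_neg_if_outside_triangle) auto
qed

definition even_positions :: "'a list \<Rightarrow> 'a set" where
  "even_positions ys = (\<lambda>i. ys ! (2 * i)) ` {..<(length ys + 1) div 2}"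

lemma even_positions_subset: "even_positions ys \<subseteq> set ys"
  by (auto simp: even_positions_def)

lemma card_even_positions: "distinct ys \<Longrightarrow> card (even_positions ys) = (length ys + 1) div 2"
  unfolding even_positions_def
  by (subst card_image) (auto intro!: inj_onI simp: nth_eq_iff_index_eq)

lemma nth_in_even_positions:
  "distinct ys \<Longrightarrow> l < length ys \<Longrightarrow> ys ! l \<in> even_positions ys \<longleftrightarrow> even l"
  by (auto simp: even_positions_def nth_eq_iff_index_eq)

lemma even_positions_separate_chords:
  assumes "convex_position P" "p \<in> P" "set ys = P - {p}" "distinct ys"
    and "sorted_wrt (\<lambda>q q'. orient p q q' > 0) ys"
  shows "separates_chords (P - even_positions ys) (even_positions ys)"
proof -
  define B where "B = even_positions ys"
  have "p \<notin> B" using assms(3) even_positions_subset[of ys] by (auto simp: B_def)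
  have sep: "\<exists>u\<in>P - B. \<exists>v\<in>P - B. orient (ys ! (2 * i)) (ys ! (2 * j)) u > 0
      \<and> orient (ys ! (2 * i)) (ys ! (2 * j)) v < 0" if "i < j" "2 * j < length ys" for i j
  proof (intro bexI conjI)
    show "orient (ys ! (2 * i)) (ys ! (2 * j)) p > 0"
      "orient (ys ! (2 * i)) (ys ! (2 * j)) (ys ! (2 * i + 1)) < 0"
      using angular_chord_separates[OF assms] that by auto
    show "p \<in> P - B" using assms(2) \<open>p \<notin> B\<close> by blast
    show "ys ! (2 * i + 1) \<in> P - B"
      using that assms(3,4) nth_in_even_positions[of ys "2 * i + 1"] nth_mem[of "2 * i + 1" ys]
      by (auto simp: B_def)
  qed
  show ?thesis
    unfolding separates_chords_def B_def[symmetric]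
  proof (intro ballI impI)
    fix x z assume xz: "x \<in> B" "z \<in> B" "x \<noteq> z"
    obtain i j
      where ij: "x = ys ! (2 * i)" "z = ys ! (2 * j)" "2 * i < length ys" "2 * j < length ys"
      using xz(1,2) unfolding B_def even_positions_def by fastforce
    with xz(3) consider "i < j" | "j < i" by (metis linorder_neqE_nat)
    then show "\<exists>u\<in>P - B. \<exists>v\<in>P - B. orient x z u > 0 \<and> orient x z v < 0"
    proof cases
      case 1
      then show ?thesis using sep[of i j] ij by blast
    next
      case 2
      then show ?thesis using sep[of j i] ij orient_swap[of z x] by fastforce
    qed
  qed
qed

lemma convex_position_alternating_split:
  assumes "finite P" "general_position P" "convex_position P" "P \<noteq> {}"
  obtains B where "B \<subseteq> P" "card B = card P div 2" "separates_chords (P - B) B"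
proof -
  obtain p where "p \<in> P" using assms(4) by blast
  have "p \<notin> convex hull (P - {p})" using assms(3) \<open>p \<in> P\<close> by (simp add: convex_position_def)
  moreover have "orient p q q' \<noteq> 0" if "q \<in> P - {p}" "q' \<in> P - {p}" "q \<noteq> q'" for q q'
    using that \<open>p \<in> P\<close> by (intro general_position_orient_nonzero[OF assms(2)]) auto
  ultimately obtain ys where ys: "set ys = P - {p}" "distinct ys"
    and sorted: "sorted_wrt (\<lambda>q q'. orient p q q' > 0) ys"
    using angular_sorted_list[of "P - {p}" p] assms(1) by auto
  have "length ys + 1 = card P"
    using ys \<open>p \<in> P\<close> assms(1,4) distinct_card[of ys] card_gt_0_iff[of P]
    by (simp add: card_Diff_singleton)
  then have "card (even_positions ys) = card P div 2"
    using card_even_positions[OF ys(2)] by simp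
  moreover have "even_positions ys \<subseteq> P" using even_positions_subset[of ys] ys(1) by blast
  moreover note even_positions_separate_chords[OF assms(3) \<open>p \<in> P\<close> ys sorted]
  ultimately show thesis using that by blast
qed

lemma card_le_card_related_pairs:
  assumes "finite E" "finite F" "\<forall>f\<in>F. \<exists>e\<in>E. Q e f"
  shows "card F \<le> card {(e, f). e \<in> E \<and> f \<in> F \<and> Q e f}"
proof (rule surj_card_le)
  show "finite {(e, f). e \<in> E \<and> f \<in> F \<and> Q e f}"
    by (rule finite_subset[of _ "E \<times> F"]) (use assms(1,2) in auto)
  show "F \<subseteq> snd ` {(e, f). e \<in> E \<and> f \<in> F \<and> Q e f}"
    using assms(3) by force
qed

lemma finite_spanning_tree: "finite X \<Longrightarrow> spanning_tree X T \<Longrightarrow> finite T"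
  unfolding spanning_tree_def all_edges_def
  by (rule finite_subset[of _ "Pow X"]) auto

lemma spanning_trees_crossings_ge:
  assumes "convex_position P" "general_position P" "finite P" "R \<union> B = P" "R \<inter> B = {}"
    and "separates_chords R B" "spanning_tree R T\<^sub>R" "spanning_tree B T\<^sub>B"
  shows "card B - 1 \<le> card {(e, f). e \<in> T\<^sub>R \<and> f \<in> T\<^sub>B \<and> convex hull e \<inter> convex hull f \<noteq> {}}"
proof -
  have "\<forall>f\<in>T\<^sub>B. \<exists>e\<in>T\<^sub>R. convex hull e \<inter> convex hull f \<noteq> {}"
  proof
    fix f assume "f \<in> T\<^sub>B"
    then obtain x z where "f = {x, z}" "x \<in> B" "z \<in> B" "x \<noteq> z"
      using assms(8) by (auto simp: spanning_tree_def all_edges_def)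
    moreover obtain u v where "u \<in> R" "v \<in> R" "orient x z u > 0" "orient x z v < 0"
      using assms(6) \<open>x \<in> B\<close> \<open>z \<in> B\<close> \<open>x \<noteq> z\<close> unfolding separates_chords_def by blast
    moreover have "R \<subseteq> P" "x \<in> P - R" "z \<in> P - R"
      using assms(4,5) \<open>x \<in> B\<close> \<open>z \<in> B\<close> by auto
    ultimately show "\<exists>e\<in>T\<^sub>R. convex hull e \<inter> convex hull f \<noteq> {}"
      using spanning_tree_crosses_chord[OF assms(1,2) _ assms(7)] by simp
  qed
  moreover have "finite T\<^sub>R" "finite T\<^sub>B"
    using assms(3-5,7,8) finite_spanning_tree[of R] finite_spanning_tree[of B] by auto
  ultimately have "card T\<^sub>B \<le> card {(e, f). e \<in> T\<^sub>R \<and> f \<in> T\<^sub>B \<and> convex hull e \<inter> convex hull f \<noteq> {}}"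
    by (intro card_le_card_related_pairs)
  then show ?thesis using assms(8) by (simp add: spanning_tree_def)
qed

lemma generic_is_mst: "generic P \<Longrightarrow> S \<subseteq> P \<Longrightarrow> is_mst S (mst S)"
  unfolding generic_def mst_def by (metis theI')

lemma cr2_le_cr:
  assumes "finite P" "R \<union> B = P" "R \<inter> B = {}"
  shows "cr2 R B \<le> cr P"
  unfolding cr_def
proof (rule Max_ge)
  have "{cr2 R B | R B. R \<union> B = P \<and> R \<inter> B = {}} \<subseteq> (\<lambda>B. cr2 (P - B) B) ` Pow P"
  proof
    fix c assume "c \<in> {cr2 R B | R B. R \<union> B = P \<and> R \<inter> B = {}}"
    then obtain R' B' where "c = cr2 R' B'" "R' \<union> B' = P" "R' \<inter> B' = {}" by blast
    then have "B' \<in> Pow P" "c = cr2 (P - B') B'" by (auto simp: Un_Diff Diff_triv)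
    then show "c \<in> (\<lambda>B. cr2 (P - B) B) ` Pow P" by (rule rev_image_eqI)
  qed
  then show "finite {cr2 R B | R B. R \<union> B = P \<and> R \<inter> B = {}}"
    by (rule finite_subset) (simp add: assms(1))
  show "cr2 R B \<in> {cr2 R B | R B. R \<union> B = P \<and> R \<inter> B = {}}"
    using assms(2,3) by blast
qed

theorem theorem4:
  fixes P :: "point set" and n :: nat
  assumes "generic P" and "convex_position P" and "card P = n"
  shows "int (cr P) \<ge> int (n div 2) - 1"
proof (cases "P = {}")
  case True
  then show ?thesis using assms(3) by simp
next
  case False
  have "finite P" "general_position P" using assms(1) by (auto simp: generic_def)
  then obtain B where "B \<subseteq> P" "card B = n div 2" "separates_chords (P - B) B"
    using convex_position_alternating_split[OF _ _ assms(2) False] assms(3) by blast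
  moreover have "spanning_tree (P - B) (mst (P - B))" "spanning_tree B (mst B)"
    using generic_is_mst[OF assms(1)] \<open>B \<subseteq> P\<close> by (auto simp: is_mst_def)
  ultimately have "card B - 1 \<le> cr2 (P - B) B"
    unfolding cr2_def
    using spanning_trees_crossings_ge[OF assms(2) \<open>general_position P\<close> \<open>finite P\<close>, of "P - B" B]
    by auto
  also have "\<dots> \<le> cr P" using \<open>B \<subseteq> P\<close> by (intro cr2_le_cr[OF \<open>finite P\<close>]) auto
  finally show ?thesis using \<open>card B = n div 2\<close> by simp
qed

end
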